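(* Let $M\in\mathbb N$ and let real numbers $Q_k,\hat Q_k$, $0\le k\le M$, be given. Let $\theta_n,\tilde\theta_n$ ($0\le n\le M$) be the unique reals such that $$\sum_{k\le M}Q_k\binom{h_k}{0}+\hat Q_k\binom{0}{\hat h_k}=\sum_{n\le M}\theta_n\binom{f_n}{g_n}+\tilde\theta_n\binom{\tilde f_n}{\tilde g_n}.$$ Then there are real coefficients $A_{n+2j,n},B_{n+2j,n},\tilde A_{n+2j,n},\tilde B_{n+2j,n}$ depending only on $p,q,\mu$ such that $$\theta_n=\sum_{j=0}^{[\frac{M-n}2]}A_{n+2j,n}Q_{n+2j}+B_{n+2j,n}\hat Q_{n+2j},\qquad \tilde\theta_n=\sum_{j=0}^{[\frac{M-n}2]}\tilde A_{n+2j,n}Q_{n+2j}+\tilde B_{n+2j,n}\hat Q_{n+2j},$$ and in particular $$A_{n,n}=\frac{q}{\Gamma(2pq+p+q)},\quad B_{n,n}=\frac{p}{\gamma(2pq+p+q)},\quad A_{n+2,n}=-\frac{\tilde e_{n+2,n}}{\Gamma\gamma(2pq+p+q)},\quad B_{n+2,n}=\frac{p+1}{q+1}\,\frac{\tilde e_{n+2,n}}{\gamma^2(2pq+p+q)},$$ where $\tilde e_{n+2,n}=(n+2)(n+1)\frac{pq\gamma(q+1)(1-\mu)}{3pq+p+q-1}$.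
   Context: One space dimension; $p,q>1$, $\mu>0$; $\Gamma,\gamma>0$ with $\gamma^p=\Gamma\frac{p+1}{pq-1}$, $\Gamma^q=\gamma\frac{q+1}{pq-1}$. $h_n(y)=\sum_{j\le n/2}\frac{n!}{(n-2j)!j!}(-1)^jy^{n-2j}$ and $\hat h_n(y)=\sum_{j\le n/2}\frac{n!}{(n-2j)!j!}(-1)^j\mu^jy^{n-2j}$. The pairs $(f_n,g_n)$ and $(\tilde f_n,\tilde g_n)$ are the polynomial eigenvectors of degree $n$ of $\mathscr H+\mathcal M$ (with $\mathscr H=\mathrm{diag}(\frac{d^2}{dy^2}-\frac y2\frac d{dy},\ \mu\frac{d^2}{dy^2}-\frac y2\frac d{dy})$ and $\mathcal M=\begin{pmatrix}-\frac{p+1}{pq-1}&p\gamma^{p-1}\\ q\Gamma^{q-1}&-\frac{q+1}{pq-1}\end{pmatrix}$) with eigenvalues $1-\frac n2$ and $-(\frac n2+\frac{(p+1)(q+1)}{pq-1})$ respectively, normalized so that the leading coefficients are $((p+1)\Gamma,(q+1)\gamma)$ and $(p\Gamma,-q\gamma)$ respectively; each is a combination of $\binom{h_{n-2j}}{0},\binom{0}{\hat h_{n-2j}}$, $0\le j\le n/2$. *)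

theory Defs
  imports Complex_Main "HOL-Computational_Algebra.Polynomial"
begin

definition hp :: "nat \<Rightarrow> real poly" where
  "hp n = (\<Sum>j\<le>n div 2. monom (fact n / (fact (n - 2*j) * fact j) * (-1)^j) (n - 2*j))"

definition hhp :: "real \<Rightarrow> nat \<Rightarrow> real poly" where
  "hhp mu n = (\<Sum>j\<le>n div 2. monom (fact n / (fact (n - 2*j) * fact j) * (-1)^j * mu^j) (n - 2*j))"

definition Lop :: "real \<Rightarrow> real poly \<Rightarrow> real poly" where
  "Lop d f = smult d (pderiv (pderiv f)) - smult (1/2) ([:0, 1:] * pderiv f)"

definition is_poly_eigvec ::
  "real \<Rightarrow> real \<Rightarrow> real \<Rightarrow> real \<Rightarrow> real \<Rightarrow> real \<Rightarrow> nat \<Rightarrow> real \<Rightarrow> real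
    \<Rightarrow> real poly \<Rightarrow> real poly \<Rightarrow> bool" where
  "is_poly_eigvec p q mu Gam gam lam n a b f g \<longleftrightarrow>
     (\<exists>c d. f = (\<Sum>j\<le>n div 2. smult (c j) (hp (n - 2*j))) \<and>
            g = (\<Sum>j\<le>n div 2. smult (d j) (hhp mu (n - 2*j)))) \<and>
     coeff f n = a \<and> coeff g n = b \<and>
     Lop 1 f + smult (- (p+1)/(p*q-1)) f + smult (p * gam powr (p-1)) g = smult lam f \<and>
     Lop mu g + smult (q * Gam powr (q-1)) f + smult (- (q+1)/(p*q-1)) g = smult lam g"

definition e_tilde :: "real \<Rightarrow> real \<Rightarrow> real \<Rightarrow> real \<Rightarrow> nat \<Rightarrow> real" where
  "e_tilde p q mu gam n =
     real (n+2) * real (n+1) * (p*q*gam*(q+1)*(1-mu) / (3*p*q+p+q-1))"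

end

(*
  Comparing coefficients of y^m turns the identity into a block triangular linear system with
  2x2 blocks: the coefficient of y^m receives contributions only from degrees n \<ge> m with n - m
  even, and the diagonal block is the constant matrix L of leading coefficients of the two
  eigenvector families. Back substitution writes (\<theta>_n, \<theta>~_n) as a combination of the
  (Q_k, Q^_k), k \<ge> n, k - n even, with 2x2 blocks independent of M and Q. The diagonal block is
  L\<inverse>, and the first off-diagonal block L\<inverse> (H - F L\<inverse>) involves the subleading
  coefficients F of the eigenvectors, which are read off from the coefficient of y^n in the
  eigenvalue equations.
*)
theory Submission
  imports Defs "HOL-Analysis.Cartesian_Space"
begin

lemma matrix_vector_mult_sum_right:
  "A *v (\<Sum>i\<in>S. x i) = (\<Sum>i\<in>S. A *v x i)"
  by (induction S rule: infinite_finite_induct) (simp_all add: matrix_vector_right_distrib)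

lemma matrix_vector_mult_sum_left:
  "(\<Sum>i\<in>S. A i) *v x = (\<Sum>i\<in>S. A i *v x)"
  by (induction S rule: infinite_finite_induct) (simp_all add: matrix_vector_mult_add_rdistrib)

text \<open>The block (m, k) of the solution operator, obtained by back substitution, of the block
  triangular system \<open>(\<Sum>n. F n m *v x n) = (\<Sum>k. H k m *v v k)\<close>; \<open>Linv\<close> is a left inverse of the
  diagonal blocks.\<close>

function tri_inverse ::
  "(nat \<Rightarrow> nat \<Rightarrow> 'a::comm_ring_1^'n^'n) \<Rightarrow> (nat \<Rightarrow> nat \<Rightarrow> 'a^'n^'n) \<Rightarrow> 'a^'n^'n
    \<Rightarrow> nat \<Rightarrow> nat \<Rightarrow> 'a^'n^'n" where
  "tri_inverse F H Linv m k =
     Linv ** (H k m - (\<Sum>i\<in>{m<..k}. F i m ** tri_inverse F H Linv i k))"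
  by pat_completeness auto
termination by (relation "measure (\<lambda>(F, H, Linv, m, k). k - m)") auto

declare tri_inverse.simps [simp del]

lemma tri_inverse_solves:
  fixes F H :: "nat \<Rightarrow> nat \<Rightarrow> 'a::comm_ring_1^'n^'n"
  assumes left_inverse: "\<And>m. Linv ** F m m = mat 1"
    and F_triangular: "\<And>n m. n < m \<Longrightarrow> F n m = 0"
    and H_triangular: "\<And>k m. k < m \<Longrightarrow> H k m = 0"
    and system: "\<And>m. (\<Sum>k\<le>M. H k m *v v k) = (\<Sum>n\<le>M. F n m *v x n)"
    and "m \<le> M"
  shows "x m = (\<Sum>k=m..M. tri_inverse F H Linv m k *v v k)"
  using \<open>m \<le> M\<close>
proof (induction "M - m" arbitrary: m rule: less_induct)
  case less
  let ?R = "tri_inverse F H Linv"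
  let ?C = "\<lambda>k. \<Sum>n\<in>{m<..k}. F n m ** ?R n k"
  have lhs: "(\<Sum>k\<le>M. H k m *v v k) = (\<Sum>k=m..M. H k m *v v k)"
    by (rule sum.mono_neutral_right) (auto simp: H_triangular)
  have "(\<Sum>n\<le>M. F n m *v x n) = (\<Sum>n=m..M. F n m *v x n)"
    by (rule sum.mono_neutral_right) (auto simp: F_triangular)
  also have "\<dots> = F m m *v x m + (\<Sum>n\<in>{m<..M}. F n m *v x n)"
    using less.prems by (rule sum.head)
  also have "(\<Sum>n\<in>{m<..M}. F n m *v x n) = (\<Sum>n\<in>{m<..M}. \<Sum>k=n..M. (F n m ** ?R n k) *v v k)"
    using less by (intro sum.cong) (auto simp: matrix_vector_mult_sum_right matrix_vector_mul_assoc)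
  also have "\<dots> = (\<Sum>n\<in>{m<..M}. \<Sum>k\<in>{k \<in> {m<..M}. n \<le> k}. (F n m ** ?R n k) *v v k)"
    by (intro sum.cong) auto
  also have "\<dots> = (\<Sum>k\<in>{m<..M}. \<Sum>n\<in>{n \<in> {m<..M}. n \<le> k}. (F n m ** ?R n k) *v v k)"
    by (rule sum.swap_restrict) auto
  also have "\<dots> = (\<Sum>k\<in>{m<..M}. ?C k *v v k)"
    by (intro sum.cong) (auto simp: matrix_vector_mult_sum_left intro!: sum.cong)
  also have "\<dots> = (\<Sum>k=m..M. ?C k *v v k)"
    by (rule sum.mono_neutral_left) auto
  finally have "F m m *v x m = (\<Sum>k=m..M. (H k m - ?C k) *v v k)"
    using system[of m] lhs by (simp add: algebra_simps sum_subtractf)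
  then have "Linv *v (F m m *v x m) = (\<Sum>k=m..M. ?R m k *v v k)"
    by (simp add: matrix_vector_mult_sum_right matrix_vector_mul_assoc tri_inverse.simps[of F H Linv m])
  then show ?case by (simp add: matrix_vector_mul_assoc left_inverse)
qed

lemma tri_inverse_eq_0_if_odd:
  assumes F_odd: "\<And>n m. odd (n - m) \<Longrightarrow> F n m = 0"
    and H_odd: "\<And>k m. odd (k - m) \<Longrightarrow> H k m = 0"
    and "odd (k - m)"
  shows "tri_inverse F H Linv m k = 0"
  using \<open>odd (k - m)\<close>
proof (induction "k - m" arbitrary: m rule: less_induct)
  case less
  have "F i m ** tri_inverse F H Linv i k = 0" if i: "i \<in> {m<..k}" for i
  proof (cases "odd (i - m)")
    case False
    have "k - m = (k - i) + (i - m)" using i by auto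
    with False less.prems have "odd (k - i)" by simp
    with i less.hyps have "tri_inverse F H Linv i k = 0" by auto
    then show ?thesis by simp
  qed (simp add: F_odd)
  moreover have "H k m = 0" using less.prems by (rule H_odd)
  ultimately show ?case
    by (simp add: tri_inverse.simps[of F H Linv m k])
qed

lemma sum_atLeastAtMost_even_offsets:
  fixes G :: "nat \<Rightarrow> 'a::comm_monoid_add"
  assumes "m \<le> M" and "\<And>k. odd (k - m) \<Longrightarrow> G k = 0"
  shows "(\<Sum>k=m..M. G k) = (\<Sum>j\<le>(M - m) div 2. G (m + 2*j))"
proof -
  have "(\<Sum>j\<le>(M - m) div 2. G (m + 2*j)) = sum G ((\<lambda>j. m + 2*j) ` {..(M - m) div 2})"
    by (simp add: sum.reindex inj_on_def)
  also have "\<dots> = (\<Sum>k=m..M. G k)"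
  proof (rule sum.mono_neutral_left)
    show "(\<lambda>j. m + 2*j) ` {..(M - m) div 2} \<subseteq> {m..M}"
      using assms(1) by auto
    show "\<forall>k\<in>{m..M} - (\<lambda>j. m + 2*j) ` {..(M - m) div 2}. G k = 0"
    proof
      fix k assume k: "k \<in> {m..M} - (\<lambda>j. m + 2*j) ` {..(M - m) div 2}"
      have "odd (k - m)"
      proof
        assume "even (k - m)"
        then obtain j where j: "k - m = 2*j" by (elim evenE)
        with k have "k = m + 2*j" "j \<le> (M - m) div 2" by auto
        with k show False by blast
      qed
      then show "G k = 0" by (rule assms(2))
    qed
  qed auto
  finally show ?thesis ..
qed

lemma neg_one_power_mult: "(-1) ^ n * x ^ n = (- x) ^ n" for x :: "'a::comm_ring_1"
  by (simp add: power_mult_distrib[symmetric])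

lemma diff_double_eq_iff:
  fixes j k m :: nat
  assumes "2*j \<le> k"
  shows "k - 2*j = m \<longleftrightarrow> j = (k - m) div 2 \<and> m \<le> k \<and> even (k - m)"
proof
  assume "k - 2*j = m"
  with assms have "k - m = 2*j \<and> m \<le> k" by linarith
  then show "j = (k - m) div 2 \<and> m \<le> k \<and> even (k - m)" by simp
next
  assume j: "j = (k - m) div 2 \<and> m \<le> k \<and> even (k - m)"
  then have "2 * ((k - m) div 2) = k - m" by (intro dvd_mult_div_cancel) blast
  with j show "k - 2*j = m" by linarith
qed

lemma coeff_hhp:
  "coeff (hhp mu k) m =
     (if m \<le> k \<and> even (k - m)
      then fact k / (fact m * fact ((k - m) div 2)) * (- mu) ^ ((k - m) div 2) else 0)"
  (is "_ = ?rhs")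
proof -
  have "coeff (hhp mu k) m =
          (\<Sum>j\<le>k div 2. if k - 2*j = m then fact k / (fact (k - 2*j) * fact j) * (-1) ^ j * mu ^ j else 0)"
    unfolding hhp_def coeff_sum coeff_monom ..
  also have "\<dots> = (\<Sum>j\<le>k div 2. if j = (k - m) div 2 \<and> m \<le> k \<and> even (k - m)
                     then fact k / (fact m * fact j) * (- mu) ^ j else 0)"
  proof (intro sum.cong refl)
    fix j assume "j \<in> {..k div 2}"
    then have iff: "k - 2*j = m \<longleftrightarrow> j = (k - m) div 2 \<and> m \<le> k \<and> even (k - m)"
      by (intro diff_double_eq_iff) simp
    show "(if k - 2*j = m then fact k / (fact (k - 2*j) * fact j) * (-1) ^ j * mu ^ j else 0) =
      (if j = (k - m) div 2 \<and> m \<le> k \<and> even (k - m) then fact k / (fact m * fact j) * (- mu) ^ j else 0)"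
    proof (cases "k - 2*j = m")
      case True
      then have "fact (k - 2*j) = (fact m :: real)" by simp
      then show ?thesis
        by (simp only: if_P[OF True] if_P[OF iffD1[OF iff True]] neg_one_power_mult mult.assoc)
    next
      case False
      then have "\<not> (j = (k - m) div 2 \<and> m \<le> k \<and> even (k - m))"
        unfolding iff .
      with False show ?thesis by (simp only: if_False)
    qed
  qed
  also have "\<dots> = ?rhs"
  proof (cases "m \<le> k \<and> even (k - m)")
    case True
    then have "(k - m) div 2 \<in> {..k div 2}" by (simp add: div_le_mono)
    with True show ?thesis by (simp only: True simp_thms finite_atMost sum.delta if_True)
  next
    case False
    then show ?thesis by (simp only: False simp_thms if_False sum.neutral_const)
  qed
  finally show ?thesis .
qed

lemma hp_eq_hhp_1: "hp = hhp 1"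
  by (simp add: fun_eq_iff hp_def hhp_def)

lemma coeff_hhp_self [simp]: "coeff (hhp mu k) k = 1"
  by (simp add: coeff_hhp)

lemma coeff_hhp_Suc_Suc: "coeff (hhp mu (n + 2)) n = - mu * (real (n + 2) * real (n + 1))"
proof -
  have "fact (n + 2) = real (n + 2) * real (n + 1) * fact n"
    by (simp add: numeral_2_eq_2 algebra_simps)
  then show ?thesis by (simp add: coeff_hhp)
qed

lemma coeff_hhp_combination_eq_0:
  assumes "\<not> (m \<le> n \<and> even (n - m))"
  shows "coeff (\<Sum>j\<le>n div 2. smult (c j) (hhp mu (n - 2*j))) m = 0"
  unfolding coeff_sum coeff_smult
proof (intro sum.neutral ballI)
  fix j assume "j \<in> {..n div 2}"
  then have "2*j \<le> n" by simp
  have "\<not> (m \<le> n - 2*j \<and> even (n - 2*j - m))"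
  proof
    assume h: "m \<le> n - 2*j \<and> even (n - 2*j - m)"
    with \<open>2*j \<le> n\<close> have "n - m = (n - 2*j - m) + 2*j" by linarith
    with h have "m \<le> n \<and> even (n - m)" by (metis diff_le_self dvd_add dvd_triv_left order_trans)
    with assms show False ..
  qed
  then show "c j * coeff (hhp mu (n - 2*j)) m = 0"
    by (simp only: coeff_hhp if_False mult_zero_right)
qed

definition mat2 :: "'a::zero \<Rightarrow> 'a \<Rightarrow> 'a \<Rightarrow> 'a \<Rightarrow> 'a^2^2" where
  "mat2 a b c d = vector [vector [a, b], vector [c, d]]"

lemma mat2_nth [simp]:
  "mat2 a b c d $ 1 $ 1 = a" "mat2 a b c d $ 1 $ 2 = b"
  "mat2 a b c d $ 2 $ 1 = c" "mat2 a b c d $ 2 $ 2 = d"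
  by (simp_all add: mat2_def)

lemma mat2_mult [simp]:
  "mat2 a b c d ** mat2 a' b' c' d' =
     mat2 (a*a' + b*c') (a*b' + b*d') (c*a' + d*c') (c*b' + d*d')"
  by (simp add: vec_eq_iff forall_2 matrix_matrix_mult_def sum_2)

lemma mat2_diff [simp]:
  "mat2 a b c d - mat2 a' b' c' d' = mat2 (a - a') (b - b') (c - c') (d - d')"
  by (simp add: vec_eq_iff forall_2)

lemma mat2_eq_iff [simp]:
  "mat2 a b c d = mat2 a' b' c' d' \<longleftrightarrow> a = a' \<and> b = b' \<and> c = c' \<and> d = d'"
  by (metis mat2_nth)

lemma mat2_mult_vector:
  "mat2 a b c d *v vector [x, y] = vector [a*x + b*y, c*x + d*y]"
  by (simp add: vec_eq_iff forall_2 matrix_vector_mult_def sum_2)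

lemma mat2_zero: "mat2 0 0 0 0 = 0"
  by (simp add: vec_eq_iff forall_2)

lemma mat2_one: "mat2 1 0 0 1 = mat 1"
  by (simp add: vec_eq_iff forall_2 mat_def)

lemma coeff_Lop:
  "coeff (Lop d f) n = d * real (n + 2) * real (n + 1) * coeff f (n + 2) - real n / 2 * coeff f n"
proof -
  have "coeff ([:0, 1:] * pderiv f) n = real n * coeff f n"
    by (cases n) (simp_all add: mult_pCons_left coeff_pderiv)
  moreover have "coeff (pderiv (pderiv f)) n = real (n + 2) * real (n + 1) * coeff f (n + 2)"
    by (simp add: coeff_pderiv algebra_simps)
  ultimately show ?thesis
    unfolding Lop_def coeff_diff coeff_smult by simp
qed

lemma is_poly_eigvec_coeff_eq_0:
  assumes "is_poly_eigvec p q mu Gam gam lam n a b f g" and "\<not> (m \<le> n \<and> even (n - m))"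
  shows "coeff f m = 0" and "coeff g m = 0"
  using assms coeff_hhp_combination_eq_0[OF assms(2)]
  by (auto simp: is_poly_eigvec_def hp_eq_hhp_1)

lemma is_poly_eigvec_subleading:
  assumes "is_poly_eigvec p q mu Gam gam lam (n + 2) a b f g"
  shows "(real n / 2 + (p+1)/(p*q-1) + lam) * coeff f n - p * gam powr (p-1) * coeff g n
           = real (n + 2) * real (n + 1) * a"
    and "(real n / 2 + (q+1)/(p*q-1) + lam) * coeff g n - q * Gam powr (q-1) * coeff f n
           = mu * real (n + 2) * real (n + 1) * b"
proof -
  define rf rg where "rf = (p+1)/(p*q-1)" and "rg = (q+1)/(p*q-1)"
  from assms have lead: "coeff f (n + 2) = a" "coeff g (n + 2) = b"
    and eq_f: "Lop 1 f + smult (- rf) f + smult (p * gam powr (p-1)) g = smult lam f"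
    and eq_g: "Lop mu g + smult (q * Gam powr (q-1)) f + smult (- rg) g = smult lam g"
    unfolding is_poly_eigvec_def rf_def rg_def minus_divide_left by blast+
  from arg_cong[OF eq_f, of "\<lambda>P. coeff P n"]
  show "(real n / 2 + (p+1)/(p*q-1) + lam) * coeff f n - p * gam powr (p-1) * coeff g n
          = real (n + 2) * real (n + 1) * a"
    unfolding coeff_add coeff_smult coeff_Lop lead rf_def[symmetric]
    by (simp add: algebra_simps)
  from arg_cong[OF eq_g, of "\<lambda>P. coeff P n"]
  show "(real n / 2 + (q+1)/(p*q-1) + lam) * coeff g n - q * Gam powr (q-1) * coeff f n
          = mu * real (n + 2) * real (n + 1) * b"
    unfolding coeff_add coeff_smult coeff_Lop lead rg_def[symmetric]
    by (simp add: algebra_simps)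
qed

lemma linear_2x2_unique:
  fixes a b c d x z x' z' u v :: real
  assumes "a*x - b*z = u" and "d*z - c*x = v" and "a*x' - b*z' = u" and "d*z' - c*x' = v"
    and "a*d - b*c \<noteq> 0"
  shows "x = x' \<and> z = z'"
proof -
  have "(a*d - b*c) * (x - x') = d * (a*x - b*z - (a*x' - b*z')) + b * (d*z - c*x - (d*z' - c*x'))"
    and "(a*d - b*c) * (z - z') = a * (d*z - c*x - (d*z' - c*x')) + c * (a*x - b*z - (a*x' - b*z'))"
    by (simp_all add: algebra_simps)
  with assms show ?thesis by simp
qed

locale hermite_eigenbasis =
  fixes p q mu Gam gam :: real and f g ft gt :: "nat \<Rightarrow> real poly"
  assumes p_gt_1: "p > 1" and q_gt_1: "q > 1" and Gam_pos: "Gam > 0" and gam_pos: "gam > 0"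
    and gam_powr: "gam powr p = Gam * (p+1)/(p*q-1)"
    and Gam_powr: "Gam powr q = gam * (q+1)/(p*q-1)"
    and eigvec: "\<And>n. is_poly_eigvec p q mu Gam gam (1 - real n / 2) n ((p+1)*Gam) ((q+1)*gam) (f n) (g n)"
    and eigvec_tilde: "\<And>n. is_poly_eigvec p q mu Gam gam (- (real n / 2 + (p+1)*(q+1)/(p*q-1))) n
                              (p*Gam) (- (q*gam)) (ft n) (gt n)"
begin

lemma pq_gt_1: "p * q > 1"
  using p_gt_1 q_gt_1 by (simp add: less_1_mult)

lemma subleading_coeffs_eq:
  fixes n :: nat and lam a b x0 z0 :: real and F G :: "real poly"
  defines "k \<equiv> p*q - 1" and "s \<equiv> real n / 2 + lam" and "c \<equiv> real (n + 2) * real (n + 1)"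
  assumes eig: "is_poly_eigvec p q mu Gam gam lam (n + 2) a b F G"
    and det: "(s + (p+1)/k) * (s + (q+1)/k) - p*q*(p+1)*(q+1)/k^2 \<noteq> 0"
    and x0: "(s + (p+1)/k) * x0 - p*(Gam*(p+1)/(k*gam)) * z0 = c * a"
    and z0: "(s + (q+1)/k) * z0 - q*(gam*(q+1)/(k*Gam)) * x0 = mu * c * b"
  shows "coeff F n = x0 \<and> coeff G n = z0"
proof (rule linear_2x2_unique[OF _ _ x0 z0])
  have "p * gam powr (p - 1) = p*(Gam*(p+1)/(k*gam))" and "q * Gam powr (q - 1) = q*(gam*(q+1)/(k*Gam))"
    using gam_powr Gam_powr gam_pos Gam_pos by (simp_all add: powr_diff k_def)
  with is_poly_eigvec_subleading[OF eig]
  show "(s + (p+1)/k) * coeff F n - p*(Gam*(p+1)/(k*gam)) * coeff G n = c * a"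
    and "(s + (q+1)/k) * coeff G n - q*(gam*(q+1)/(k*Gam)) * coeff F n = mu * c * b"
    unfolding s_def k_def c_def by (simp_all only: ac_simps)
  have "k > 0" using pq_gt_1 by (simp add: k_def)
  then have "p*(Gam*(p+1)/(k*gam)) * (q*(gam*(q+1)/(k*Gam))) = p*q*(p+1)*(q+1)/k^2"
    using gam_pos Gam_pos by (simp add: field_simps power2_eq_square)
  with det show "(s + (p+1)/k) * (s + (q+1)/k) - p*(Gam*(p+1)/(k*gam)) * (q*(gam*(q+1)/(k*Gam))) \<noteq> 0"
    by simp
qed

lemma subleading_coeffs:
  fixes n :: nat
  defines "c \<equiv> real (n + 2) * real (n + 1)"
  shows "coeff (f (n + 2)) n = - c * Gam * (1 + p*mu) \<and> coeff (g (n + 2)) n = - c * gam * (mu + q)"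
proof -
  define k where "k = p*q - 1"
  have k: "k > 0" using pq_gt_1 by (simp add: k_def)
  have s: "real n / 2 + (1 - real (n + 2) / 2) = 0" by (simp add: field_simps)
  show ?thesis
  proof (rule subleading_coeffs_eq[OF eigvec[of "n + 2"], unfolded s add_0_left, folded k_def c_def])
    have "(p+1)/k * ((q+1)/k) - p*q*(p+1)*(q+1)/k^2 = - ((p+1)*(q+1)/k)"
      using k by (simp add: field_simps power2_eq_square) (simp add: k_def algebra_simps)
    then show "(p+1)/k * ((q+1)/k) - p*q*(p+1)*(q+1)/k^2 \<noteq> 0"
      using k p_gt_1 q_gt_1 by simp
    show "(p+1)/k * (- c * Gam * (1 + p*mu)) - p*(Gam*(p+1)/(k*gam)) * (- c * gam * (mu + q))
            = c * ((p+1) * Gam)"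
      using k gam_pos by (simp add: field_simps) (simp add: k_def algebra_simps)
    show "(q+1)/k * (- c * gam * (mu + q)) - q*(gam*(q+1)/(k*Gam)) * (- c * Gam * (1 + p*mu))
            = mu * c * ((q+1) * gam)"
      using k Gam_pos by (simp add: field_simps) (simp add: k_def algebra_simps)
  qed
qed

lemma subleading_coeffs_tilde:
  fixes n :: nat
  defines "c \<equiv> real (n + 2) * real (n + 1)" and "D \<equiv> 3*p*q + p + q - 1"
  shows "coeff (ft (n + 2)) n = - c * p * Gam * ((2*p*q + p - 1) + (p+1)*q*mu) / D
       \<and> coeff (gt (n + 2)) n = c * q * gam * ((2*p*q + q - 1)*mu + p*(q+1)) / D"
proof -
  define k where "k = p*q - 1"
  have k: "k > 0" using pq_gt_1 by (simp add: k_def)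
  have D: "D > 0" using pq_gt_1 p_gt_1 q_gt_1 by (simp add: D_def)
  have s: "real n / 2 + - (real (n + 2) / 2 + (p+1)*(q+1)/(p*q-1)) = -1 - (p+1)*(q+1)/k"
    by (simp add: field_simps k_def)
  show ?thesis
  proof (rule subleading_coeffs_eq[OF eigvec_tilde[of "n + 2"], unfolded s, folded k_def c_def])
    have "(-1 - (p+1)*(q+1)/k + (p+1)/k) * (-1 - (p+1)*(q+1)/k + (q+1)/k) - p*q*(p+1)*(q+1)/k^2 = D/k"
      using k by (simp add: field_simps power2_eq_square) (simp add: k_def D_def algebra_simps)
    then show "(-1 - (p+1)*(q+1)/k + (p+1)/k) * (-1 - (p+1)*(q+1)/k + (q+1)/k) - p*q*(p+1)*(q+1)/k^2 \<noteq> 0"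
      using k D by simp
    show "(-1 - (p+1)*(q+1)/k + (p+1)/k) * (- c * p * Gam * ((2*p*q + p - 1) + (p+1)*q*mu) / D)
            - p*(Gam*(p+1)/(k*gam)) * (c * q * gam * ((2*p*q + q - 1)*mu + p*(q+1)) / D)
          = c * (p * Gam)"
      using k D gam_pos by (simp add: field_simps) (simp add: k_def D_def algebra_simps)
    show "(-1 - (p+1)*(q+1)/k + (q+1)/k) * (c * q * gam * ((2*p*q + q - 1)*mu + p*(q+1)) / D)
            - q*(gam*(q+1)/(k*Gam)) * (- c * p * Gam * ((2*p*q + p - 1) + (p+1)*q*mu) / D)
          = mu * c * (- (q * gam))"
      using k D Gam_pos by (simp add: field_simps) (simp add: k_def D_def algebra_simps)
  qed
qed

definition coeff_mat :: "nat \<Rightarrow> nat \<Rightarrow> real^2^2" where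
  "coeff_mat n m = mat2 (coeff (f n) m) (coeff (ft n) m) (coeff (g n) m) (coeff (gt n) m)"

definition hermite_mat :: "nat \<Rightarrow> nat \<Rightarrow> real^2^2" where
  "hermite_mat k m = mat2 (coeff (hp k) m) 0 0 (coeff (hhp mu k) m)"

definition lead_inv :: "real^2^2" where
  "lead_inv = mat2 (q / (Gam * (2*p*q+p+q))) (p / (gam * (2*p*q+p+q)))
                   ((q+1) / (Gam * (2*p*q+p+q))) (- (p+1) / (gam * (2*p*q+p+q)))"

definition basis_change :: "nat \<Rightarrow> nat \<Rightarrow> real^2^2" where
  "basis_change = tri_inverse coeff_mat hermite_mat lead_inv"

lemma coeff_mat_diag: "coeff_mat n n = mat2 ((p+1)*Gam) (p*Gam) ((q+1)*gam) (- (q*gam))"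
  using eigvec[of n] eigvec_tilde[of n] by (simp add: coeff_mat_def is_poly_eigvec_def)

lemma lead_inv_left_inverse: "lead_inv ** coeff_mat n n = mat 1"
proof -
  define S where "S = 2*p*q + p + q"
  have "S > 0" using p_gt_1 q_gt_1 by (simp add: S_def add_pos_pos)
  moreover have "lead_inv = mat2 (q / (Gam * S)) (p / (gam * S)) ((q+1) / (Gam * S)) (- (p+1) / (gam * S))"
    by (simp add: lead_inv_def S_def)
  ultimately show ?thesis
    using Gam_pos gam_pos
    by (simp add: coeff_mat_diag flip: mat2_one) (simp add: field_simps, simp add: S_def algebra_simps)
qed

lemma coeff_mat_eq_0: "\<not> (m \<le> n \<and> even (n - m)) \<Longrightarrow> coeff_mat n m = 0"
  using is_poly_eigvec_coeff_eq_0[OF eigvec] is_poly_eigvec_coeff_eq_0[OF eigvec_tilde]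
  by (simp add: coeff_mat_def mat2_zero)

lemma hermite_mat_eq_0: "\<not> (m \<le> k \<and> even (k - m)) \<Longrightarrow> hermite_mat k m = 0"
  by (simp only: hermite_mat_def hp_eq_hhp_1 coeff_hhp if_False mat2_zero)

lemma basis_change_eq_0_if_odd: "odd (k - n) \<Longrightarrow> basis_change n k = 0"
  unfolding basis_change_def
  by (rule tri_inverse_eq_0_if_odd) (auto intro: coeff_mat_eq_0 hermite_mat_eq_0)

lemma basis_change_diag: "basis_change n n = lead_inv"
  by (simp add: basis_change_def tri_inverse.simps[of _ _ _ n n] hermite_mat_def hp_eq_hhp_1 mat2_one)

lemma basis_change_Suc_Suc:
  "basis_change n (n + 2) = lead_inv ** (hermite_mat (n + 2) n - coeff_mat (n + 2) n ** lead_inv)"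
proof -
  have "basis_change n (n + 2) =
          lead_inv ** (hermite_mat (n + 2) n - (\<Sum>i\<in>{n<..n + 2}. coeff_mat i n ** basis_change i (n + 2)))"
    unfolding basis_change_def by (rule tri_inverse.simps)
  also have "{n<..n + 2} = {n + 1, n + 2}" by auto
  also have "(\<Sum>i\<in>{n + 1, n + 2}. coeff_mat i n ** basis_change i (n + 2)) = coeff_mat (n + 2) n ** lead_inv"
    by (simp add: coeff_mat_eq_0 basis_change_diag)
  finally show ?thesis .
qed

lemma coeff_system:
  assumes hp_eq: "(\<Sum>k\<le>M. smult (Q k) (hp k)) = (\<Sum>n\<le>M. smult (th n) (f n) + smult (tht n) (ft n))"
    and hhp_eq: "(\<Sum>k\<le>M. smult (Qh k) (hhp mu k)) = (\<Sum>n\<le>M. smult (th n) (g n) + smult (tht n) (gt n))"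
  shows "(\<Sum>k\<le>M. hermite_mat k m *v vector [Q k, Qh k]) = (\<Sum>n\<le>M. coeff_mat n m *v vector [th n, tht n])"
proof -
  have "(\<Sum>k\<le>M. Q k * coeff (hp k) m) = (\<Sum>n\<le>M. th n * coeff (f n) m + tht n * coeff (ft n) m)"
    using arg_cong[OF hp_eq, of "\<lambda>P. coeff P m"] by (simp add: coeff_sum)
  moreover have "(\<Sum>k\<le>M. Qh k * coeff (hhp mu k) m) = (\<Sum>n\<le>M. th n * coeff (g n) m + tht n * coeff (gt n) m)"
    using arg_cong[OF hhp_eq, of "\<lambda>P. coeff P m"] by (simp add: coeff_sum)
  ultimately show ?thesis
    by (simp add: vec_eq_iff forall_2 hermite_mat_def coeff_mat_def mat2_mult_vector mult.commute)
qed

lemma coordinates_expansion: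
  assumes hp_eq: "(\<Sum>k\<le>M. smult (Q k) (hp k)) = (\<Sum>n\<le>M. smult (th n) (f n) + smult (tht n) (ft n))"
    and hhp_eq: "(\<Sum>k\<le>M. smult (Qh k) (hhp mu k)) = (\<Sum>n\<le>M. smult (th n) (g n) + smult (tht n) (gt n))"
    and "n \<le> M"
  shows "th n = (\<Sum>j\<le>(M - n) div 2.
                   basis_change n (n + 2*j) $ 1 $ 1 * Q (n + 2*j) + basis_change n (n + 2*j) $ 1 $ 2 * Qh (n + 2*j))"
    and "tht n = (\<Sum>j\<le>(M - n) div 2.
                   basis_change n (n + 2*j) $ 2 $ 1 * Q (n + 2*j) + basis_change n (n + 2*j) $ 2 $ 2 * Qh (n + 2*j))"
proof -
  have "vector [th n, tht n] = (\<Sum>k=n..M. basis_change n k *v vector [Q k, Qh k])"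
    unfolding basis_change_def
    by (rule tri_inverse_solves[where x = "\<lambda>n. vector [th n, tht n]" and v = "\<lambda>k. vector [Q k, Qh k]"])
      (auto intro: lead_inv_left_inverse coeff_mat_eq_0 hermite_mat_eq_0 coeff_system[OF hp_eq hhp_eq] \<open>n \<le> M\<close>)
  also have "\<dots> = (\<Sum>j\<le>(M - n) div 2. basis_change n (n + 2*j) *v vector [Q (n + 2*j), Qh (n + 2*j)])"
    by (rule sum_atLeastAtMost_even_offsets) (simp_all add: \<open>n \<le> M\<close> basis_change_eq_0_if_odd)
  finally have "vector [th n, tht n] = \<dots>" .
  from arg_cong[OF this, of "\<lambda>v. v $ 1"] arg_cong[OF this, of "\<lambda>v. v $ 2"]
  show "th n = (\<Sum>j\<le>(M - n) div 2.
                 basis_change n (n + 2*j) $ 1 $ 1 * Q (n + 2*j) + basis_change n (n + 2*j) $ 1 $ 2 * Qh (n + 2*j))"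
    and "tht n = (\<Sum>j\<le>(M - n) div 2.
                 basis_change n (n + 2*j) $ 2 $ 1 * Q (n + 2*j) + basis_change n (n + 2*j) $ 2 $ 2 * Qh (n + 2*j))"
    by (simp_all add: matrix_vector_mult_def sum_2)
qed

lemma basis_change_Suc_Suc_explicit:
  fixes n :: nat
  defines "c \<equiv> real (n + 2) * real (n + 1)" and "S \<equiv> 2*p*q + p + q" and "D \<equiv> 3*p*q + p + q - 1"
  shows "basis_change n (n + 2) =
     mat2 (q / (Gam * S)) (p / (gam * S)) ((q+1) / (Gam * S)) (- (p+1) / (gam * S))
     ** (mat2 (- c) 0 0 (- (mu * c))
         - mat2 (- c * Gam * (1 + p*mu)) (- c * p * Gam * ((2*p*q + p - 1) + (p+1)*q*mu) / D)
                (- c * gam * (mu + q)) (c * q * gam * ((2*p*q + q - 1)*mu + p*(q+1)) / D)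
         ** mat2 (q / (Gam * S)) (p / (gam * S)) ((q+1) / (Gam * S)) (- (p+1) / (gam * S)))"
proof -
  have H: "hermite_mat (n + 2) n = mat2 (- c) 0 0 (- (mu * c))"
    unfolding hermite_mat_def hp_eq_hhp_1 coeff_hhp_Suc_Suc by (simp add: c_def)
  have F: "coeff_mat (n + 2) n =
      mat2 (- c * Gam * (1 + p*mu)) (- c * p * Gam * ((2*p*q + p - 1) + (p+1)*q*mu) / D)
           (- c * gam * (mu + q)) (c * q * gam * ((2*p*q + q - 1)*mu + p*(q+1)) / D)"
    using subleading_coeffs[of n] subleading_coeffs_tilde[of n]
    unfolding coeff_mat_def c_def D_def by simp
  show ?thesis
    unfolding basis_change_Suc_Suc H F lead_inv_def S_def ..
qed

lemma basis_change_Suc_Suc_entries: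
  "basis_change n (n + 2) $ 1 $ 1 = - e_tilde p q mu gam n / (Gam * gam * (2*p*q+p+q))"
  "basis_change n (n + 2) $ 1 $ 2 = (p+1)/(q+1) * e_tilde p q mu gam n / (gam^2 * (2*p*q+p+q))"
proof -
  define c S D where "c = real (n + 2) * real (n + 1)" and "S = 2*p*q + p + q" and "D = 3*p*q + p + q - 1"
  have S: "S > 0" and D: "D > 0" using p_gt_1 q_gt_1 pq_gt_1 by (simp_all add: S_def D_def add_pos_pos)
  note bc = basis_change_Suc_Suc_explicit[of n, folded c_def S_def D_def]
  have e: "e_tilde p q mu gam n = c * (p*q*gam*(q+1)*(1-mu) / D)"
    by (simp add: e_tilde_def c_def D_def)
  have e': "(p+1)/(q+1) * e_tilde p q mu gam n / (gam^2 * S) = (p+1) * c * p * q * (1-mu) / (D * gam * S)"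
  proof -
    have "e_tilde p q mu gam n = (q+1) * (c * p * q * gam * (1-mu) / D)"
      unfolding e by simp
    moreover have "q + 1 \<noteq> 0" using q_gt_1 by simp
    ultimately have h: "(p+1)/(q+1) * e_tilde p q mu gam n = (p+1) * (c * p * q * gam * (1-mu) / D)"
      by simp
    show ?thesis unfolding h using gam_pos S D by (simp add: field_simps power2_eq_square)
  qed
  show "basis_change n (n + 2) $ 1 $ 1 = - e_tilde p q mu gam n / (Gam * gam * (2*p*q+p+q))"
    unfolding S_def[symmetric] bc e using S D Gam_pos gam_pos
    by (simp add: field_simps) (unfold S_def D_def, algebra)
  show "basis_change n (n + 2) $ 1 $ 2 = (p+1)/(q+1) * e_tilde p q mu gam n / (gam^2 * (2*p*q+p+q))"
    unfolding S_def[symmetric] bc e' using S D Gam_pos gam_pos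
    by (simp add: field_simps) (unfold S_def D_def, algebra)
qed

end

theorem mainTheorem4:
  fixes p q mu Gam gam :: real and f g ft gt :: "nat \<Rightarrow> real poly"
  assumes "p > 1" and "q > 1" and "mu > 0" and "Gam > 0" and "gam > 0"
    and "gam powr p = Gam * (p+1)/(p*q-1)" and "Gam powr q = gam * (q+1)/(p*q-1)"
    and "\<forall>n. is_poly_eigvec p q mu Gam gam (1 - real n / 2) n ((p+1)*Gam) ((q+1)*gam) (f n) (g n)"
    and "\<forall>n. is_poly_eigvec p q mu Gam gam (- (real n / 2 + (p+1)*(q+1)/(p*q-1))) n
               (p*Gam) (- (q*gam)) (ft n) (gt n)"
  shows "\<exists>A B At Bt :: nat \<Rightarrow> nat \<Rightarrow> real.
    (\<forall>(M::nat) (Q::nat\<Rightarrow>real) (Qh::nat\<Rightarrow>real) (th::nat\<Rightarrow>real) (tht::nat\<Rightarrow>real).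
        (\<Sum>k\<le>M. smult (Q k) (hp k)) = (\<Sum>n\<le>M. smult (th n) (f n) + smult (tht n) (ft n)) \<and>
        (\<Sum>k\<le>M. smult (Qh k) (hhp mu k)) = (\<Sum>n\<le>M. smult (th n) (g n) + smult (tht n) (gt n))
        \<longrightarrow> (\<forall>n\<le>M.
              th n = (\<Sum>j\<le>(M-n) div 2. A (n+2*j) n * Q (n+2*j) + B (n+2*j) n * Qh (n+2*j)) \<and>
              tht n = (\<Sum>j\<le>(M-n) div 2. At (n+2*j) n * Q (n+2*j) + Bt (n+2*j) n * Qh (n+2*j)))) \<and>
    (\<forall>n. A n n = q / (Gam * (2*p*q+p+q)) \<and>
         B n n = p / (gam * (2*p*q+p+q)) \<and>
         A (n+2) n = - e_tilde p q mu gam n / (Gam * gam * (2*p*q+p+q)) \<and>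
         B (n+2) n = (p+1)/(q+1) * e_tilde p q mu gam n / (gam^2 * (2*p*q+p+q)))"
proof -
  interpret hermite_eigenbasis p q mu Gam gam f g ft gt
    using assms by unfold_locales auto
  show ?thesis
  proof (rule exI[of _ "\<lambda>k n. basis_change n k $ 1 $ 1"], rule exI[of _ "\<lambda>k n. basis_change n k $ 1 $ 2"],
      rule exI[of _ "\<lambda>k n. basis_change n k $ 2 $ 1"], rule exI[of _ "\<lambda>k n. basis_change n k $ 2 $ 2"],
      rule conjI)
  qed (use coordinates_expansion in blast,
       use basis_change_Suc_Suc_entries in \<open>simp add: basis_change_diag lead_inv_def\<close>)
qed

end
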